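(* Let $\mathcal{C}=\mathsf{CSS}(A,B)$ with $A,B\subseteq\mathbb{F}_q^n$. If there exists a diagonal $n\times n$ matrix $D$ over $\mathbb{F}_q$ whose diagonal coefficients are not all equal such that $aD\in A$ and $bD\in B$ for all $a\in A$ and $b\in B$, then $\mathcal{C}$ is a splitting code.
   Context: For a CSS code $\mathsf{CSS}(A,B)$ given by subspaces $A,B\subseteq\mathbb{F}_q^n$ (vectors treated as row vectors), a subspace $A$ splits on a non-empty $h\subsetneq\{1,\dots,n\}$ if $A=A_1\oplus A_2$ where $A_1$ has support $h$ and $A_2$ is supported on the complement of $h$. The code splits on $h$ if both $A$ and $B$ split on $h$, and it is a splitting code if it splits on some such $h$. *)

theory Defs
  imports "HOL-Analysis.Analysis"
begin

text \<open>Vectors in F_q^n are rendered as 'a ^ 'n with 'a a finite field and 'n a finite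
  index type (the coordinates {1..n}). Subspaces are vec.subspace (F-linear subspaces).\<close>

definition supported_on :: "('a::zero ^ 'n) set \<Rightarrow> 'n set \<Rightarrow> bool" where
  "supported_on S h \<longleftrightarrow> (\<forall>v\<in>S. \<forall>i. i \<notin> h \<longrightarrow> v $ i = 0)"

definition subspace_splits_on :: "('a::field ^ 'n) set \<Rightarrow> 'n set \<Rightarrow> bool" where
  "subspace_splits_on A h \<longleftrightarrow>
     (\<exists>A1 A2. vec.subspace A1 \<and> vec.subspace A2 \<and>
        supported_on A1 h \<and> supported_on A2 (- h) \<and>
        A1 \<inter> A2 = {0} \<and> A = {x + y | x y. x \<in> A1 \<and> y \<in> A2})"

definition css_splits_on :: "('a::field ^ 'n) set \<Rightarrow> ('a ^ 'n) set \<Rightarrow> 'n set \<Rightarrow> bool" where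
  "css_splits_on A B h \<longleftrightarrow> h \<noteq> {} \<and> h \<noteq> UNIV \<and> subspace_splits_on A h \<and> subspace_splits_on B h"

definition splitting_code :: "('a::field ^ 'n) set \<Rightarrow> ('a ^ 'n) set \<Rightarrow> bool" where
  "splitting_code A B \<longleftrightarrow> (\<exists>h. css_splits_on A B h)"

end

theory Submission
  imports Defs
begin

text \<open>A diagonal matrix D with entries d acts on row vectors by coordinatewise scaling.
  If a subspace A is invariant under this scaling, it is invariant under p(D) for every
  polynomial p. Taking for p the Lagrange polynomial that is 1 at the value l and 0 at the
  other (finitely many) diagonal entries, p(D) is the projection onto the coordinates
  h = {i. d i = l}, so A contains the parts of its vectors supported on h and on its
  complement; hence A splits on h. If the diagonal entries are not all equal, h is a
  proper nonempty subset, and the same h works for A and B simultaneously.\<close>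

definition diag_scale :: "('n \<Rightarrow> 'a::field) \<Rightarrow> 'a ^ 'n \<Rightarrow> 'a ^ 'n" where
  "diag_scale d x = (\<chi> i. d i * x $ i)"

definition vec_restrict :: "'n set \<Rightarrow> 'a::field ^ 'n \<Rightarrow> 'a ^ 'n" where
  "vec_restrict h = diag_scale (\<lambda>i. of_bool (i \<in> h))"

lemma diag_scale_nth [simp]: "diag_scale d x $ i = d i * x $ i"
  by (simp add: diag_scale_def)

lemma vec_restrict_nth [simp]: "vec_restrict h x $ i = (if i \<in> h then x $ i else 0)"
  by (simp add: vec_restrict_def)

lemma linear_diag_scale: "Vector_Spaces.linear (*s) (*s) (diag_scale d)"
  by (auto simp: Vector_Spaces.linear_iff vec.vector_space_axioms vec_eq_iff algebra_simps)

lemma linear_vec_restrict: "Vector_Spaces.linear (*s) (*s) (vec_restrict h)"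
  unfolding vec_restrict_def by (rule linear_diag_scale)

lemma vec_restrict_add_compl: "vec_restrict h x + vec_restrict (- h) x = x"
  by (simp add: vec_eq_iff)

lemma vector_matrix_mult_diagonal:
  assumes "\<forall>i j. i \<noteq> j \<longrightarrow> D $ i $ j = 0"
  shows "x v* D = diag_scale (\<lambda>i. D $ i $ i) x"
proof -
  have "(\<Sum>i\<in>UNIV. x $ i * D $ i $ j) = D $ j $ j * x $ j" for j
    by (subst sum.remove[of _ j]) (auto simp: assms)
  then show ?thesis by (simp add: vector_matrix_mult_def vec_eq_iff)
qed

lemma subspace_diag_scale_prod_closed:
  assumes A: "vec.subspace A" and closed: "\<And>a. a \<in> A \<Longrightarrow> diag_scale d a \<in> A"
    and "finite S" and "a \<in> A"
  shows "diag_scale (\<lambda>i. \<Prod>\<mu>\<in>S. d i - \<mu>) a \<in> A"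
  using \<open>finite S\<close>
proof (induction S rule: finite_induct)
  case empty
  then show ?case using \<open>a \<in> A\<close> by (simp add: diag_scale_def)
next
  case (insert m S)
  let ?y = "diag_scale (\<lambda>i. \<Prod>\<mu>\<in>S. d i - \<mu>) a"
  have "diag_scale (\<lambda>i. \<Prod>\<mu>\<in>insert m S. d i - \<mu>) a = diag_scale d ?y - m *s ?y"
    using insert.hyps by (simp add: vec_eq_iff left_diff_distrib mult.assoc)
  then show ?case
    using insert.IH closed A vec.subspace_diff vec.subspace_scale by metis
qed

lemma subspace_vec_restrict_level_set_closed:
  fixes A :: "('a::field ^ 'n) set"
  assumes A: "vec.subspace A" and closed: "\<And>a. a \<in> A \<Longrightarrow> diag_scale d a \<in> A"
    and a: "a \<in> A"
  shows "vec_restrict {i. d i = l} a \<in> A"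
proof -
  define S where "S = range d - {l}"
  define c where "c = (\<Prod>\<mu>\<in>S. l - \<mu>)"
  have "finite S" by (simp add: S_def)
  have "c \<noteq> 0" by (simp add: c_def S_def \<open>finite S\<close>)
  have "(\<Prod>\<mu>\<in>S. d i - \<mu>) = (if d i = l then c else 0)" for i
    using \<open>finite S\<close> by (auto simp: c_def S_def intro!: prod_zero)
  then have "vec_restrict {i. d i = l} a = inverse c *s diag_scale (\<lambda>i. \<Prod>\<mu>\<in>S. d i - \<mu>) a"
    using \<open>c \<noteq> 0\<close> by (simp add: vec_eq_iff)
  then show ?thesis
    using subspace_diag_scale_prod_closed[OF A closed \<open>finite S\<close> a] A vec.subspace_scale by metis
qed

lemma subspace_splits_on_if_vec_restrict_closed:
  assumes A: "vec.subspace A" and closed: "\<And>a. a \<in> A \<Longrightarrow> vec_restrict h a \<in> A"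
  shows "subspace_splits_on A h"
  unfolding subspace_splits_on_def
proof (intro exI conjI)
  have compl_closed: "vec_restrict (- h) a \<in> A" if "a \<in> A" for a
    using vec_restrict_add_compl[of h a] closed[OF that] vec.subspace_diff[OF A that]
    by (metis add_diff_cancel_left')
  show "vec.subspace (vec_restrict h ` A)" "vec.subspace (vec_restrict (- h) ` A)"
    using A linear_vec_restrict by (blast intro: vec.linear_subspace_image)+
  show "supported_on (vec_restrict h ` A) h" "supported_on (vec_restrict (- h) ` A) (- h)"
    by (auto simp: supported_on_def)
  show "vec_restrict h ` A \<inter> vec_restrict (- h) ` A = {0}"
  proof
    show "vec_restrict h ` A \<inter> vec_restrict (- h) ` A \<subseteq> {0}"
      by (clarsimp simp: vec_eq_iff) metis
    show "{0} \<subseteq> vec_restrict h ` A \<inter> vec_restrict (- h) ` A"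
      using vec.subspace_0[OF A] by (auto intro!: image_eqI[of 0 _ 0] simp: vec_eq_iff)
  qed
  show "A = {x + y | x y. x \<in> vec_restrict h ` A \<and> y \<in> vec_restrict (- h) ` A}"
  proof (intro equalityI subsetI)
    fix a assume "a \<in> A"
    then show "a \<in> {x + y | x y. x \<in> vec_restrict h ` A \<and> y \<in> vec_restrict (- h) ` A}"
      by (metis (mono_tags, lifting) image_eqI mem_Collect_eq vec_restrict_add_compl)
  next
    fix a assume "a \<in> {x + y | x y. x \<in> vec_restrict h ` A \<and> y \<in> vec_restrict (- h) ` A}"
    then show "a \<in> A"
      using closed compl_closed vec.subspace_add[OF A] by blast
  qed
qed

lemma subspace_splits_on_level_set:
  assumes "vec.subspace A" and "\<And>a. a \<in> A \<Longrightarrow> diag_scale d a \<in> A"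
  shows "subspace_splits_on A {i. d i = l}"
  using assms
  by (intro subspace_splits_on_if_vec_restrict_closed subspace_vec_restrict_level_set_closed)

theorem proposition14:
  fixes A B :: "('a::{field,finite} ^ 'n) set"
  assumes "vec.subspace A" and "vec.subspace B"
    and "\<exists>D :: 'a ^ 'n ^ 'n.
           (\<forall>i j. i \<noteq> j \<longrightarrow> D $ i $ j = 0) \<and>
           (\<exists>i j. D $ i $ i \<noteq> D $ j $ j) \<and>
           (\<forall>a\<in>A. a v* D \<in> A) \<and> (\<forall>b\<in>B. b v* D \<in> B)"
  shows "splitting_code A B"
proof -
  obtain D :: "'a ^ 'n ^ 'n" where diagonal: "\<forall>i j. i \<noteq> j \<longrightarrow> D $ i $ j = 0"
    and "\<exists>i j. D $ i $ i \<noteq> D $ j $ j"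
    and DA: "\<forall>a\<in>A. a v* D \<in> A" and DB: "\<forall>b\<in>B. b v* D \<in> B"
    using assms(3) by auto
  then obtain i j where ne: "D $ i $ i \<noteq> D $ j $ j" by blast
  define d where "d = (\<lambda>k. D $ k $ k)"
  define h where "h = {k. d k = d i}"
  have scale: "x v* D = diag_scale d x" for x
    unfolding d_def by (rule vector_matrix_mult_diagonal[OF diagonal])
  have "i \<in> h" "j \<notin> h" using ne by (simp_all add: h_def d_def)
  moreover have "subspace_splits_on A h" "subspace_splits_on B h"
    unfolding h_def using assms(1,2) DA DB
    by (simp_all add: scale subspace_splits_on_level_set)
  ultimately show ?thesis
    unfolding splitting_code_def css_splits_on_def by blast
qed

end
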